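(* Suppose the GAPs lie in $\mathbf{Q}^+$. Then in the Com-IC model, for any fixed seed sets $S_\mathcal{A},S_\mathcal{B}$, $\sigma_\mathcal{A}(S_\mathcal{A},S_\mathcal{B})$ is monotonically non-decreasing in each of $q_{\mathcal{A}|\emptyset},q_{\mathcal{A}|\mathcal{B}},q_{\mathcal{B}|\emptyset},q_{\mathcal{B}|\mathcal{A}}$ when the other three GAPs are held fixed, as long as the modified GAP vector still lies in $\mathbf{Q}^+$.
   Context: Com-IC model. Let $G=(V,E,p)$ be a directed graph with $p:E\to[0,1]$ and $N^-(v)$ the in-neighbours of $v$. Two items $\mathcal{A},\mathcal{B}$; GAPs $\mathbf{Q}=(q_{\mathcal{A}|\emptyset},q_{\mathcal{A}|\mathcal{B}},q_{\mathcal{B}|\emptyset},q_{\mathcal{B}|\mathcal{A}})\in[0,1]^4$. Given seed sets $S_\mathcal{A},S_\mathcal{B}\subseteq V$, randomness: each edge $(u,v)$ independently live w.p. $p(u,v)$; each node $v$ independently draws $\alpha^v_\mathcal{A},\alpha^v_\mathcal{B}$ uniform on $[0,1]$, a uniformly random permutation $\pi_v$ of $N^-(v)$, and a fair coin $\tau_v\in\{\mathcal{A},\mathcal{B}\}$. For each item $X$ each node is $X$-idle, $X$-suspended, $X$-adopted or $X$-rejected; initially all idle. At step $0$ nodes of $S_\mathcal{A}$ become $\mathcal{A}$-adopted and nodes of $S_\mathcal{B}$ become $\mathcal{B}$-adopted (order for nodes in both given by $\tau_v$). At step $t\ge1$, $v$ is informed of $X$ by in-neighbour $u$ if $(u,v)$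 is live and $u$ adopted $X$ at step $t-1$; informing in-neighbours are processed in order $\pi_v$ (an in-neighbour that adopted both items is processed for both, in its adoption order). When $v$ is informed of $X$ ($Y$ the other item) while $X$-idle: if $Y$-adopted, $v$ becomes $X$-adopted if $\alpha^v_X\le q_{X|Y}$, else $X$-rejected; otherwise $X$-adopted if $\alpha^v_X\le q_{X|\emptyset}$, else $X$-suspended. Informing a non-$X$-idle node of $X$ has no effect. Reconsideration: when an $X$-suspended node becomes $Y$-adopted, it becomes $X$-adopted if $\alpha^v_X\le q_{X|Y}$, else $X$-rejected. The process stops when nothing changes. $\sigma_\mathcal{A}(S_\mathcal{A},S_\mathcal{B})$ is the expected final number of $\mathcal{A}$-adopted nodes. $\mathbf{Q}^+$: $q_{\mathcal{A}|\emptyset}\le q_{\mathcal{A}|\mathcal{B}}$ and $q_{\mathcal{B}|\emptyset}\le q_{\mathcal{B}|\mathcal{A}}$. *)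

theory Defs
  imports "HOL-Probability.Probability" "HOL-Combinatorics.Multiset_Permutations"
begin

datatype item = IA | IB

datatype status = Idle | Suspended | Adopted | Rejected

fun other :: "item \<Rightarrow> item" where
  "other IA = IB" | "other IB = IA"

datatype gap = QA0 | QAB | QB0 | QBA

type_synonym gaps = "gap \<Rightarrow> real"

fun q0 :: "gaps \<Rightarrow> item \<Rightarrow> real" where
  "q0 Q IA = Q QA0" | "q0 Q IB = Q QB0"

fun q1 :: "gaps \<Rightarrow> item \<Rightarrow> real" where
  "q1 Q IA = Q QAB" | "q1 Q IB = Q QBA"

definition valid_gaps :: "gaps \<Rightarrow> bool" where
  "valid_gaps Q \<longleftrightarrow> (\<forall>i. 0 \<le> Q i \<and> Q i \<le> 1)"

definition Qplus :: "gaps \<Rightarrow> bool" where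
  "Qplus Q \<longleftrightarrow> Q QA0 \<le> Q QAB \<and> Q QB0 \<le> Q QBA"

definition in_nbrs :: "('v \<times> 'v) set \<Rightarrow> 'v \<Rightarrow> 'v set" where
  "in_nbrs E v = {u. (u, v) \<in> E}"

text \<open>A possible world: (alpha_A, alpha_B, live edges, permutations pi_v, coins tau_v).\<close>
type_synonym 'v world =
  "('v \<Rightarrow> real) \<times> ('v \<Rightarrow> real) \<times> ('v \<times> 'v \<Rightarrow> bool) \<times> ('v \<Rightarrow> 'v list) \<times> ('v \<Rightarrow> item)"

definition w_alpha :: "'v world \<Rightarrow> 'v \<Rightarrow> item \<Rightarrow> real" where
  "w_alpha w v X = (if X = IA then fst w v else fst (snd w) v)"

definition w_live :: "'v world \<Rightarrow> 'v \<times> 'v \<Rightarrow> bool" where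
  "w_live w = fst (snd (snd w))"

definition w_perm :: "'v world \<Rightarrow> 'v \<Rightarrow> 'v list" where
  "w_perm w = fst (snd (snd (snd w)))"

definition w_coin :: "'v world \<Rightarrow> 'v \<Rightarrow> item" where
  "w_coin w = snd (snd (snd (snd w)))"

text \<open>Node-local state: status for each item, together with the list of items the node
  adopted in the current step (in adoption order).\<close>
type_synonym nstate = "(item \<Rightarrow> status) \<times> item list"

definition inform :: "gaps \<Rightarrow> (item \<Rightarrow> real) \<Rightarrow> item \<Rightarrow> nstate \<Rightarrow> nstate" where
  "inform Q a X sa = (case sa of (s, acc) \<Rightarrow>
     (let Y = other X in
      if s X \<noteq> Idle then (s, acc)
      else if s Y = Adopted then
        (if a X \<le> q1 Q X then (s(X := Adopted), acc @ [X]) else (s(X := Rejected), acc))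
      else if a X \<le> q0 Q X then
        (if s Y = Suspended then
           (if a Y \<le> q1 Q Y then (s(X := Adopted, Y := Adopted), acc @ [X, Y])
            else (s(X := Adopted, Y := Rejected), acc @ [X]))
         else (s(X := Adopted), acc @ [X]))
      else (s(X := Suspended), acc)))"

text \<open>Global state: statuses of all nodes, and items adopted by each node in the last step.\<close>
type_synonym 'v gstate = "('v \<Rightarrow> item \<Rightarrow> status) \<times> ('v \<Rightarrow> item list)"

definition init_state :: "'v set \<Rightarrow> 'v set \<Rightarrow> 'v world \<Rightarrow> 'v gstate" where
  "init_state SA SB w =
     ((\<lambda>v X. if (X = IA \<and> v \<in> SA) \<or> (X = IB \<and> v \<in> SB) then Adopted else Idle),
      (\<lambda>v. if v \<in> SA \<and> v \<in> SB then [w_coin w v, other (w_coin w v)]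
           else if v \<in> SA then [IA] else if v \<in> SB then [IB] else []))"

definition events :: "'v world \<Rightarrow> ('v \<Rightarrow> item list) \<Rightarrow> 'v \<Rightarrow> item list" where
  "events w nw v = concat (map (\<lambda>u. if w_live w (u, v) then nw u else []) (w_perm w v))"

definition step :: "gaps \<Rightarrow> 'v world \<Rightarrow> 'v gstate \<Rightarrow> 'v gstate" where
  "step Q w g = (case g of (st, nw) \<Rightarrow>
     (let r = (\<lambda>v. fold (inform Q (w_alpha w v)) (events w nw v) (st v, [])) in
      ((\<lambda>v. fst (r v)), (\<lambda>v. snd (r v)))))"

fun run :: "gaps \<Rightarrow> 'v set \<Rightarrow> 'v set \<Rightarrow> 'v world \<Rightarrow> nat \<Rightarrow> 'v gstate" where
  "run Q SA SB w 0 = init_state SA SB w"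
| "run Q SA SB w (Suc t) = step Q w (run Q SA SB w t)"

text \<open>Adoption is absorbing, so the final set of A-adopted nodes is the set of nodes
  that are A-adopted at some step.\<close>
definition adoptedA :: "gaps \<Rightarrow> 'v set \<Rightarrow> 'v set \<Rightarrow> 'v world \<Rightarrow> 'v set" where
  "adoptedA Q SA SB w = {v. \<exists>t. fst (run Q SA SB w t) v IA = Adopted}"

definition world_measure :: "('v \<times> 'v) set \<Rightarrow> ('v \<times> 'v \<Rightarrow> real) \<Rightarrow> 'v world measure" where
  "world_measure E p =
     (PiM UNIV (\<lambda>v. uniform_measure lborel {0..1::real})) \<Otimes>\<^sub>M
     (PiM UNIV (\<lambda>v. uniform_measure lborel {0..1::real})) \<Otimes>\<^sub>M
     (PiM UNIV (\<lambda>e. measure_pmf (bernoulli_pmf (if e \<in> E then p e else 0)))) \<Otimes>\<^sub>M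
     (PiM UNIV (\<lambda>v. measure_pmf (pmf_of_set (permutations_of_set (in_nbrs E v))))) \<Otimes>\<^sub>M
     (PiM UNIV (\<lambda>v. measure_pmf (pmf_of_set {IA, IB})))"

definition sigmaA :: "('v::finite \<times> 'v) set \<Rightarrow> ('v \<times> 'v \<Rightarrow> real) \<Rightarrow> gaps \<Rightarrow> 'v set \<Rightarrow> 'v set \<Rightarrow> real" where
  "sigmaA E p Q SA SB = (\<integral>w. real (card (adoptedA Q SA SB w)) \<partial>world_measure E p)"

end

theory Submission
  imports Defs
begin

text \<open>Run the processes for \<open>Q\<close> and for a larger \<open>Q'\<close> on the same possible world.
  Each node's status is constrained by a local invariant relating it to the node's thresholds
  \<open>\<alpha>\<close>; comparing the invariants for \<open>Q\<close> and \<open>Q'\<close> shows that a node which adopts an item under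
  \<open>Q\<close> also adopts it under \<open>Q'\<close>, provided it has been informed of both items at least as early
  under \<open>Q'\<close>. Informing in turn only travels along live edges from adopters, so by induction on
  the time step the two facts propagate together. Hence in every world the set of
  A-adopted nodes can only grow, and so does its expected size.\<close>

lemma item_eq_or_other: "Z = X \<or> Z = other X"
  by (cases Z; cases X) auto

lemma all_item: "(\<forall>X. P X) \<longleftrightarrow> P IA \<and> P IB"
  by (metis (full_types) item.exhaust)

lemma q0_le_q1: "Qplus Q \<Longrightarrow> q0 Q X \<le> q1 Q X"
  by (cases X) (auto simp: Qplus_def)

lemma q0_mono: "(\<And>j. Q j \<le> Q' j) \<Longrightarrow> q0 Q X \<le> q0 Q' X"
  by (cases X) auto

lemma q1_mono: "(\<And>j. Q j \<le> Q' j) \<Longrightarrow> q1 Q X \<le> q1 Q' X"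
  by (cases X) auto

section \<open>Reaction of a single node\<close>

lemma inform_preserves_adopted:
  "s Z = Adopted \<Longrightarrow> fst (inform Q a X (s, acc)) Z = Adopted"
  unfolding inform_def Let_def by auto

lemma inform_preserves_informed:
  "s Z \<noteq> Idle \<Longrightarrow> fst (inform Q a X (s, acc)) Z \<noteq> Idle"
  unfolding inform_def Let_def by auto

lemma inform_informs: "fst (inform Q a X (s, acc)) X \<noteq> Idle"
  unfolding inform_def Let_def by auto

lemma inform_keeps_idle:
  "s Z = Idle \<Longrightarrow> Z \<noteq> X \<Longrightarrow> fst (inform Q a X (s, acc)) Z = Idle"
  unfolding inform_def Let_def by auto

lemma inform_snd:
  "\<exists>new. snd (inform Q a X (s, acc)) = acc @ new \<and>
     set new = {Z. fst (inform Q a X (s, acc)) Z = Adopted \<and> s Z \<noteq> Adopted}"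
  using item_eq_or_other[of _ X]
  unfolding inform_def Let_def by (auto split: if_splits)

text \<open>By the last clause, an adoption that failed the test against \<open>q\<^sub>X\<^sub>|\<^sub>\<emptyset>\<close> came after the
  adoption of the other item, which was a seed or passed its own test against \<open>q\<^sub>Y\<^sub>|\<^sub>\<emptyset>\<close>.\<close>
definition node_consistent ::
    "gaps \<Rightarrow> (item \<Rightarrow> real) \<Rightarrow> (item \<Rightarrow> bool) \<Rightarrow> (item \<Rightarrow> status) \<Rightarrow> bool" where
  "node_consistent Q a seed s \<longleftrightarrow> (\<forall>X.
     \<not> (s X = Suspended \<and> s (other X) = Adopted) \<and>
     (s X = Rejected \<longrightarrow> a X > q1 Q X) \<and>
     (s X = Suspended \<longrightarrow> a X > q0 Q X) \<and>
     (s X = Adopted \<longrightarrow> seed X \<or> a X \<le> q1 Q X) \<and>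
     (s X = Adopted \<and> \<not> seed X \<and> a X > q0 Q X \<longrightarrow>
        s (other X) = Adopted \<and> (seed (other X) \<or> a (other X) \<le> q0 Q (other X))))"

lemma inform_node_consistent:
  assumes "node_consistent Q a seed s" "Qplus Q"
  shows "node_consistent Q a seed (fst (inform Q a X (s, acc)))"
  using assms(1) q0_le_q1[OF assms(2), of IA] q0_le_q1[OF assms(2), of IB]
  unfolding node_consistent_def inform_def Let_def all_item
  by (cases X; cases "s IA"; cases "s IB"; simp; linarith?)

lemma fold_inform_invariant:
  assumes "P s" "\<And>X s acc. P s \<Longrightarrow> P (fst (inform Q a X (s, acc)))"
  shows "P (fst (fold (inform Q a) xs (s, acc)))"
  using assms(1)
proof (induction xs arbitrary: s acc)
  case (Cons x xs)
  then show ?case using assms(2)[of s x acc] by (cases "inform Q a x (s, acc)") auto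
qed simp

lemma fold_inform_informs:
  "X \<in> set xs \<Longrightarrow> fst (fold (inform Q a) xs (s, acc)) X \<noteq> Idle"
proof (induction xs arbitrary: s acc)
  case (Cons x xs)
  show ?case
  proof (cases "X = x")
    case True
    obtain s1 acc1 where step1: "inform Q a x (s, acc) = (s1, acc1)"
      by (cases "inform Q a x (s, acc)")
    have "s1 X \<noteq> Idle"
      using inform_informs[of Q a x s acc] True step1 by simp
    then have "fst (fold (inform Q a) xs (s1, acc1)) X \<noteq> Idle"
      by (rule fold_inform_invariant[where P = "\<lambda>s. s X \<noteq> Idle"]) (rule inform_preserves_informed)
    then show ?thesis using step1 by simp
  next
    case False
    then show ?thesis using Cons by (cases "inform Q a x (s, acc)") auto
  qed
qed simp

lemma fold_inform_keeps_idle: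
  "s Z = Idle \<Longrightarrow> Z \<notin> set xs \<Longrightarrow> fst (fold (inform Q a) xs (s, acc)) Z = Idle"
proof (induction xs arbitrary: s acc)
  case (Cons x xs)
  then show ?case using inform_keeps_idle[of s Z x Q a acc]
    by (cases "inform Q a x (s, acc)") auto
qed simp

lemma fold_inform_snd:
  "\<exists>new. snd (fold (inform Q a) xs (s, acc)) = acc @ new \<and>
     set new = {Z. fst (fold (inform Q a) xs (s, acc)) Z = Adopted \<and> s Z \<noteq> Adopted}"
proof (induction xs arbitrary: s acc)
  case (Cons x xs)
  obtain s1 acc1 where step1: "inform Q a x (s, acc) = (s1, acc1)"
    by (cases "inform Q a x (s, acc)")
  obtain new1 where new1: "acc1 = acc @ new1" "set new1 = {Z. s1 Z = Adopted \<and> s Z \<noteq> Adopted}"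
    using inform_snd[of Q a x s acc] step1 by auto
  obtain new2 where new2: "snd (fold (inform Q a) xs (s1, acc1)) = acc1 @ new2"
      "set new2 = {Z. fst (fold (inform Q a) xs (s1, acc1)) Z = Adopted \<and> s1 Z \<noteq> Adopted}"
    using Cons.IH[of s1 acc1] by auto
  have "s1 Z = Adopted \<Longrightarrow> fst (fold (inform Q a) xs (s1, acc1)) Z = Adopted" for Z
    by (rule fold_inform_invariant[where P = "\<lambda>s. s Z = Adopted"]) (simp_all add: inform_preserves_adopted)
  moreover have "s Z = Adopted \<Longrightarrow> s1 Z = Adopted" for Z
    using inform_preserves_adopted[of s Z Q a x acc] step1 by simp
  ultimately show ?case
    using step1 new1 new2 by (intro exI[of _ "new1 @ new2"]) auto
qed simp

section \<open>The diffusion process\<close>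

abbreviation run_status :: "gaps \<Rightarrow> 'v set \<Rightarrow> 'v set \<Rightarrow> 'v world \<Rightarrow> nat \<Rightarrow> 'v \<Rightarrow> item \<Rightarrow> status"
  where "run_status Q SA SB w t \<equiv> fst (run Q SA SB w t)"

abbreviation run_news :: "gaps \<Rightarrow> 'v set \<Rightarrow> 'v set \<Rightarrow> 'v world \<Rightarrow> nat \<Rightarrow> 'v \<Rightarrow> item list"
  where "run_news Q SA SB w t \<equiv> snd (run Q SA SB w t)"

lemma run_status_Suc:
  "run_status Q SA SB w (Suc t) v =
     fst (fold (inform Q (w_alpha w v)) (events w (run_news Q SA SB w t) v) (run_status Q SA SB w t v, []))"
  by (simp add: step_def case_prod_unfold Let_def)

lemma run_news_Suc:
  "run_news Q SA SB w (Suc t) v =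
     snd (fold (inform Q (w_alpha w v)) (events w (run_news Q SA SB w t) v) (run_status Q SA SB w t v, []))"
  by (simp add: step_def case_prod_unfold Let_def)

declare run.simps [simp del]

definition seeded :: "'v set \<Rightarrow> 'v set \<Rightarrow> 'v \<Rightarrow> item \<Rightarrow> bool" where
  "seeded SA SB v X \<longleftrightarrow> (X = IA \<and> v \<in> SA) \<or> (X = IB \<and> v \<in> SB)"

lemma run_status_0: "run_status Q SA SB w 0 v X = (if seeded SA SB v X then Adopted else Idle)"
  by (simp add: run.simps init_state_def seeded_def)

lemma mem_events_iff:
  "Z \<in> set (events w n v) \<longleftrightarrow> (\<exists>u\<in>set (w_perm w v). w_live w (u, v) \<and> Z \<in> set (n u))"
  by (auto simp: events_def split: if_splits)

lemma run_status_adopted_mono: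
  assumes "run_status Q SA SB w t v Z = Adopted" "t \<le> t'"
  shows "run_status Q SA SB w t' v Z = Adopted"
  using assms(2,1)
proof (induction t' rule: dec_induct)
  case (step n)
  then show ?case
    unfolding run_status_Suc
    by (intro fold_inform_invariant[where P = "\<lambda>s. s Z = Adopted"]) (simp_all add: inform_preserves_adopted)
qed simp

lemma run_status_informed_mono:
  assumes "run_status Q SA SB w t v Z \<noteq> Idle" "t \<le> t'"
  shows "run_status Q SA SB w t' v Z \<noteq> Idle"
  using assms(2,1)
proof (induction t' rule: dec_induct)
  case (step n)
  then show ?case
    unfolding run_status_Suc
    by (intro fold_inform_invariant[where P = "\<lambda>s. s Z \<noteq> Idle"]) (simp_all add: inform_preserves_informed)
qed simp

lemma set_run_news_0:
  "set (run_news Q SA SB w 0 v) = {Z. run_status Q SA SB w 0 v Z = Adopted}"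
  using item_eq_or_other[of _ "w_coin w v"]
  by (cases "w_coin w v") (auto simp: run.simps init_state_def)

lemma set_run_news_Suc:
  "set (run_news Q SA SB w (Suc t) v) =
     {Z. run_status Q SA SB w (Suc t) v Z = Adopted \<and> run_status Q SA SB w t v Z \<noteq> Adopted}"
  using fold_inform_snd[of Q "w_alpha w v" _ "run_status Q SA SB w t v" "[]"]
  unfolding run_status_Suc run_news_Suc by force

lemma run_news_adopted:
  "Z \<in> set (run_news Q SA SB w t v) \<Longrightarrow> run_status Q SA SB w t v Z = Adopted"
  by (cases t) (simp_all add: set_run_news_0 set_run_news_Suc)

lemma informed_after_neighbour_adopts:
  assumes "run_status Q SA SB w t u Z = Adopted" "u \<in> set (w_perm w v)" "w_live w (u, v)"
  shows "run_status Q SA SB w (Suc t) v Z \<noteq> Idle"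
  using assms(1)
proof (induction t)
  case 0
  then show ?case
    unfolding run_status_Suc
    by (intro fold_inform_informs) (auto simp: mem_events_iff set_run_news_0 intro: assms(2,3))
next
  case (Suc t)
  show ?case
  proof (cases "run_status Q SA SB w t u Z = Adopted")
    case True
    then show ?thesis using Suc.IH run_status_informed_mono[of Q SA SB w "Suc t" v Z] by simp
  next
    case False
    then show ?thesis
      unfolding run_status_Suc[of Q SA SB w "Suc t"]
      using Suc.prems assms(2,3)
      by (intro fold_inform_informs) (auto simp: mem_events_iff set_run_news_Suc)
  qed
qed

lemma informed_by_neighbour:
  assumes "run_status Q SA SB w (Suc t) v Z \<noteq> Idle" "run_status Q SA SB w t v Z = Idle"
  obtains u where "u \<in> set (w_perm w v)" "w_live w (u, v)" "Z \<in> set (run_news Q SA SB w t u)"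
  using assms fold_inform_keeps_idle mem_events_iff unfolding run_status_Suc by metis

lemma run_node_consistent:
  assumes "Qplus Q"
  shows "node_consistent Q (w_alpha w v) (seeded SA SB v) (run_status Q SA SB w t v)"
proof (induction t)
  case 0
  then show ?case by (simp add: node_consistent_def run_status_0)
next
  case (Suc t)
  then show ?case
    unfolding run_status_Suc
    by (intro fold_inform_invariant[where P = "node_consistent Q (w_alpha w v) (seeded SA SB v)"])
      (simp_all add: inform_node_consistent assms)
qed

section \<open>Coupling of the processes for two GAP vectors\<close>

text \<open>If \<open>X\<close> is adopted under \<open>Q\<close> but only suspended under \<open>Q'\<close>, then under \<open>Q\<close> it failed the
  \<open>q\<^sub>X\<^sub>|\<^sub>\<emptyset>\<close> test, so the other item was adopted before by passing its own \<open>q\<^sub>Y\<^sub>|\<^sub>\<emptyset>\<close> test;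
  that test is passed under \<open>Q'\<close> as well, and then \<open>X\<close> cannot stay suspended.\<close>
lemma node_consistent_adopted_transfer:
  assumes I: "node_consistent Q a seed s" and I': "node_consistent Q' a seed s'"
    and informed: "\<And>Z. s Z \<noteq> Idle \<Longrightarrow> s' Z \<noteq> Idle"
    and seeds: "\<And>Z. seed Z \<Longrightarrow> s' Z = Adopted"
    and le: "\<And>j. Q j \<le> Q' j" and "Qplus Q'" and X: "s X = Adopted"
  shows "s' X = Adopted"
proof (rule ccontr)
  assume nX: "s' X \<noteq> Adopted"
  define Y where "Y = other X"
  have nseed: "\<not> seed X" using seeds nX by blast
  have a1: "a X \<le> q1 Q X"
    and second: "a X > q0 Q X \<Longrightarrow> s Y = Adopted \<and> (seed Y \<or> a Y \<le> q0 Q Y)"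
    using I X nseed unfolding node_consistent_def Y_def by blast+
  have rejX': "s' X = Rejected \<Longrightarrow> a X > q1 Q' X"
    and suspX': "s' X = Suspended \<Longrightarrow> a X > q0 Q' X \<and> s' Y \<noteq> Adopted"
    and rejY': "s' Y = Rejected \<Longrightarrow> a Y > q1 Q' Y"
    and suspY': "s' Y = Suspended \<Longrightarrow> a Y > q0 Q' Y"
    using I' unfolding node_consistent_def Y_def by blast+
  have "s' X \<noteq> Rejected"
    using rejX' a1 q1_mono[of Q Q' X, OF le] by fastforce
  moreover have "s' X \<noteq> Idle" using informed X by auto
  ultimately have "s' X = Suspended" using nX by (cases "s' X") simp_all
  then have "a X > q0 Q' X" and nY: "s' Y \<noteq> Adopted" using suspX' by simp_all
  then have "a X > q0 Q X" using q0_mono[of Q Q' X, OF le] by linarith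
  then have Yad: "s Y = Adopted" and Yc: "seed Y \<or> a Y \<le> q0 Q Y" using second by simp_all
  have "a Y \<le> q0 Q Y" using Yc seeds nY by blast
  then have aY: "a Y \<le> q0 Q' Y" using q0_mono[of Q Q' Y, OF le] by linarith
  then have "s' Y \<noteq> Suspended" and "s' Y \<noteq> Rejected"
    using suspY' rejY' q0_le_q1[OF \<open>Qplus Q'\<close>, of Y] by fastforce+
  moreover have "s' Y \<noteq> Idle" using informed Yad by auto
  ultimately show False using nY by (cases "s' Y") simp_all
qed

context
  fixes Q Q' :: gaps
  assumes Qplus: "Qplus Q" "Qplus Q'" and le: "\<And>j. Q j \<le> Q' j"
begin

lemma run_adopted_transfer:
  assumes "\<forall>Z. run_status Q SA SB w t v Z \<noteq> Idle \<longrightarrow> run_status Q' SA SB w t v Z \<noteq> Idle"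
    and "run_status Q SA SB w t v X = Adopted"
  shows "run_status Q' SA SB w t v X = Adopted"
proof (rule node_consistent_adopted_transfer[OF run_node_consistent run_node_consistent])
  show "run_status Q' SA SB w t v Z = Adopted" if "seeded SA SB v Z" for Z
    using that run_status_adopted_mono[of Q' SA SB w 0 v Z t] by (simp add: run_status_0)
qed (use assms Qplus le in auto)

lemma run_informed_transfer:
  "run_status Q SA SB w t v Z \<noteq> Idle \<Longrightarrow> run_status Q' SA SB w t v Z \<noteq> Idle"
proof (induction t arbitrary: v Z)
  case 0
  then show ?case by (simp add: run_status_0)
next
  case (Suc t)
  show ?case
  proof (cases "run_status Q SA SB w t v Z = Idle")
    case False
    then show ?thesis using Suc.IH run_status_informed_mono[of Q' SA SB w t v Z "Suc t"] by auto
  next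
    case True
    then obtain u where u: "u \<in> set (w_perm w v)" "w_live w (u, v)"
        "Z \<in> set (run_news Q SA SB w t u)"
      using informed_by_neighbour[OF Suc.prems True] by metis
    have "run_status Q' SA SB w t u Z = Adopted"
      using Suc.IH run_news_adopted[OF u(3)] by (blast intro: run_adopted_transfer)
    then show ?thesis using u(1,2) by (rule informed_after_neighbour_adopts)
  qed
qed

lemma adoptedA_mono: "adoptedA Q SA SB w \<subseteq> adoptedA Q' SA SB w"
proof
  fix v assume "v \<in> adoptedA Q SA SB w"
  then obtain t where adopted: "run_status Q SA SB w t v IA = Adopted" by (auto simp: adoptedA_def)
  have "run_status Q' SA SB w t v IA = Adopted"
    using run_informed_transfer[of SA SB w t v] adopted by (blast intro: run_adopted_transfer)
  then show "v \<in> adoptedA Q' SA SB w" by (auto simp: adoptedA_def)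
qed

end

section \<open>Measurability\<close>

lemma inform_cong:
  assumes "\<And>X. a X \<le> q0 Q X \<longleftrightarrow> b X \<le> q0 Q X" "\<And>X. a X \<le> q1 Q X \<longleftrightarrow> b X \<le> q1 Q X"
  shows "inform Q a = inform Q b"
  unfolding inform_def Let_def assms ..

lemma run_cong:
  assumes "w_live w = w_live w'" "w_perm w = w_perm w'" "w_coin w = w_coin w'"
    and "\<And>v. inform Q (w_alpha w v) = inform Q (w_alpha w' v)"
  shows "run Q SA SB w t = run Q SA SB w' t"
proof (induction t)
  case 0
  show ?case unfolding run.simps init_state_def assms(3) ..
next
  case (Suc t)
  have "events w = events w'" using assms by (intro ext) (simp add: events_def)
  then show ?case using Suc assms by (simp add: run.simps(2) step_def)
qed

text \<open>The process depends on the continuous thresholds only through their comparisons with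
  the GAPs, so it factors through this map into a countable type.\<close>
definition world_profile :: "gaps \<Rightarrow> 'v world \<Rightarrow>
    ('v \<Rightarrow> bool \<times> bool \<times> bool \<times> bool) \<times> ('v \<times> 'v \<Rightarrow> bool) \<times> ('v \<Rightarrow> 'v list) \<times> ('v \<Rightarrow> item)" where
  "world_profile Q w = ((\<lambda>v. (w_alpha w v IA \<le> q0 Q IA, w_alpha w v IA \<le> q1 Q IA,
                               w_alpha w v IB \<le> q0 Q IB, w_alpha w v IB \<le> q1 Q IB)),
                        w_live w, w_perm w, w_coin w)"

lemma run_world_profile_cong:
  assumes "world_profile Q w = world_profile Q w'"
  shows "run Q SA SB w t = run Q SA SB w' t"
proof (rule run_cong)
  have "w_alpha w v X \<le> q0 Q X \<longleftrightarrow> w_alpha w' v X \<le> q0 Q X"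
    "w_alpha w v X \<le> q1 Q X \<longleftrightarrow> w_alpha w' v X \<le> q1 Q X" for v X
    using assms by (cases X; simp add: world_profile_def fun_eq_iff)+
  then show "inform Q (w_alpha w v) = inform Q (w_alpha w' v)" for v
    by (intro inform_cong)
qed (use assms in \<open>simp_all add: world_profile_def\<close>)

instance item :: countable by countable_datatype

text \<open>Spelled out on the raw components of the world so that the \<open>measurable\<close> method applies.\<close>
lemma world_profile_eq_iff: "world_profile Q w = k \<longleftrightarrow>
   (\<forall>v\<in>UNIV. (fst w v \<le> q0 Q IA \<longleftrightarrow> fst (fst k v)) \<and> (fst w v \<le> q1 Q IA \<longleftrightarrow> fst (snd (fst k v))) \<and>
      (fst (snd w) v \<le> q0 Q IB \<longleftrightarrow> fst (snd (snd (fst k v)))) \<and>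
      (fst (snd w) v \<le> q1 Q IB \<longleftrightarrow> snd (snd (snd (fst k v))))) \<and>
   (\<forall>e\<in>UNIV. fst (snd (snd w)) e = fst (snd k) e) \<and>
   (\<forall>v\<in>UNIV. fst (snd (snd (snd w))) v = fst (snd (snd k)) v) \<and>
   (\<forall>v\<in>UNIV. snd (snd (snd (snd w))) v = snd (snd (snd k)) v)"
  unfolding world_profile_def w_alpha_def w_live_def w_perm_def w_coin_def
  by (auto simp: fun_eq_iff prod_eq_iff)

lemma world_profile_measurable:
  fixes E :: "('v::finite \<times> 'v) set"
  shows "world_profile Q \<in> measurable (world_measure E p) (count_space UNIV)"
proof -
  have "Measurable.pred (world_measure E p) (\<lambda>w. world_profile Q w = k)" for k
    unfolding world_profile_eq_iff world_measure_def by measurable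
  then show ?thesis
    by (subst measurable_count_space_eq2_countable) (auto simp: pred_def vimage_def Int_def conj_commute)
qed

lemma prob_space_world_measure: "prob_space (world_measure E p)"
proof -
  have "prob_space (uniform_measure lborel {0..1::real})"
    by (rule prob_space_uniform_measure) auto
  then show ?thesis
    unfolding world_measure_def by (intro prob_space_pair prob_space_PiM prob_space_measure_pmf)
qed

lemma card_adoptedA_measurable:
  fixes E :: "('v::finite \<times> 'v) set"
  shows "(\<lambda>w. real (card (adoptedA Q SA SB w))) \<in> borel_measurable (world_measure E p)"
proof -
  define g where "g k = real (card (adoptedA Q SA SB (SOME w. world_profile Q w = k)))" for k
  have "real (card (adoptedA Q SA SB w)) = g (world_profile Q w)" for w
  proof -
    define w' where "w' = (SOME w'. world_profile Q w' = world_profile Q w)"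
    have "world_profile Q w' = world_profile Q w"
      unfolding w'_def by (rule someI) (rule refl)
    then have "run Q SA SB w' t = run Q SA SB w t" for t
      by (rule run_world_profile_cong)
    then show ?thesis
      unfolding g_def adoptedA_def w'_def[symmetric] by simp
  qed
  moreover have "(\<lambda>w. g (world_profile Q w)) \<in> borel_measurable (world_measure E p)"
    by (rule measurable_compose[OF world_profile_measurable]) simp
  ultimately show ?thesis by simp
qed

lemma integrable_card_adoptedA:
  fixes E :: "('v::finite \<times> 'v) set"
  shows "integrable (world_measure E p) (\<lambda>w. real (card (adoptedA Q SA SB w)))"
proof -
  interpret prob_space "world_measure E p" by (rule prob_space_world_measure)
  show ?thesis
  proof (rule integrable_const_bound[where B = "real (card (UNIV :: 'v set))"])
    show "AE w in world_measure E p. norm (real (card (adoptedA Q SA SB w))) \<le> real (card (UNIV :: 'v set))"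
      by (intro AE_I2) (simp add: card_mono)
  qed (rule card_adoptedA_measurable)
qed

lemma sigmaA_mono:
  assumes "Qplus Q" "Qplus Q'" "\<And>j. Q j \<le> Q' j"
  shows "sigmaA E p Q SA SB \<le> sigmaA E p Q' SA SB"
  unfolding sigmaA_def
  by (intro integral_mono integrable_card_adoptedA) (simp add: card_mono adoptedA_mono[OF assms])

text \<open>The coupling works world by world.\<close>
theorem theorem10:
  fixes E :: "('v::finite \<times> 'v) set" and p :: "'v \<times> 'v \<Rightarrow> real"
    and SA SB :: "'v set" and Q Q' :: gaps and i :: gap
  assumes "\<forall>e\<in>E. 0 \<le> p e \<and> p e \<le> 1"
    and "valid_gaps Q" and "valid_gaps Q'"
    and "Qplus Q" and "Qplus Q'"
    and "\<forall>j. j \<noteq> i \<longrightarrow> Q' j = Q j"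
    and "Q i \<le> Q' i"
  shows "sigmaA E p Q SA SB \<le> sigmaA E p Q' SA SB"
proof (rule sigmaA_mono)
  show "Q j \<le> Q' j" for j
    using assms(6,7) by (cases "j = i") auto
qed (fact assms)+

end
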